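(* Let $k\ge 1$ be a fixed integer, and for each $q\ge 1$ let $f_q:\{0,1\}^q\to\{0,1,\ldots,2^q-1\}$ be the Hamming-distance-based bijection. Then \[ \lim_{q\to\infty} d_{\max,k}(f_q)=0 \quad\text{and}\quad \lim_{q\to\infty} d_{\mathrm{ave},k}(f_q)=0 . \]
   Context: For an integer $q\ge1$ and binary arrays $x_1,x_2\in\{0,1\}^q$, let $w_H(x)$ be the Hamming weight of $x$ (number of ones) and $d_H(x_1,x_2)$ the Hamming distance. Define a total order $\succeq$ on $\{0,1\}^q$ by: $b_1\succeq b_2$ iff either $w_H(b_1)>w_H(b_2)$, or $w_H(b_1)=w_H(b_2)$ and $b_1$ is lexicographically greater than or equal to $b_2$. The Hamming-distance-based bijection $f_q:\{0,1\}^q\to\{0,1,\ldots,2^q-1\}$ is the unique bijection such that for all $b_1,b_2$, $f_q(b_1)\ge f_q(b_2)\iff b_1\succeq b_2$ (so the all-zero array maps to $0$, the arrays of weight $1$ come next, etc.). For a bijection $f:\{0,1\}^q\to\{0,\ldots,2^q-1\}$ define the distortion $d(f,b_1,b_2)=|f(b_1)-f(b_2)|/2^q$. For a fixed integer $k\ge1$ and $b\in\{0,1\}^q$, let $N_k(b)=\{x\in\{0,1\}^q: 1\le d_H(b,x)\le k\}$, and set $d_{\max,k}(f,b)=\max_{x\in N_k(b)} d(f,b,x)$, $d_{\mathrm{ave},k}(f,b)=\frac{1}{|N_k(b)|}\sum_{x\in N_k(b)} d(f,b,x)$, $d_{\max,k}(f)=\max_{b\in\{0,1\}^q} d_{\max,k}(f,b)$,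 and $d_{\mathrm{ave},k}(f)=\frac{1}{2^q}\sum_{b\in\{0,1\}^q} d_{\mathrm{ave},k}(f,b)$. *)

theory Defs
  imports Complex_Main "HOL-Library.List_Lexorder"
begin

text \<open>Binary arrays of length q are represented as boolean lists of length q
  (True = 1, False = 0). Lexicographic order is the standard one from
  List_Lexorder with False < True, first entry most significant.\<close>

definition arrays :: "nat \<Rightarrow> bool list set" where
  "arrays q = {xs. length xs = q}"

definition hw :: "bool list \<Rightarrow> nat" where
  "hw xs = count_list xs True"

definition hd_dist :: "bool list \<Rightarrow> bool list \<Rightarrow> nat" where
  "hd_dist xs ys = card {i. i < length xs \<and> xs ! i \<noteq> ys ! i}"

definition succeq :: "bool list \<Rightarrow> bool list \<Rightarrow> bool" where
  "succeq b1 b2 \<longleftrightarrow> hw b1 > hw b2 \<or> (hw b1 = hw b2 \<and> b2 \<le> b1)"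

definition fH :: "nat \<Rightarrow> bool list \<Rightarrow> nat" where
  "fH q = (THE f. bij_betw f (arrays q) {0..<2^q}
      \<and> (\<forall>b1\<in>arrays q. \<forall>b2\<in>arrays q. f b1 \<ge> f b2 \<longleftrightarrow> succeq b1 b2)
      \<and> (\<forall>x. x \<notin> arrays q \<longrightarrow> f x = 0))"

definition distortion :: "nat \<Rightarrow> (bool list \<Rightarrow> nat) \<Rightarrow> bool list \<Rightarrow> bool list \<Rightarrow> real" where
  "distortion q f b1 b2 = \<bar>real (f b1) - real (f b2)\<bar> / 2 ^ q"

definition nbhd :: "nat \<Rightarrow> nat \<Rightarrow> bool list \<Rightarrow> bool list set" where
  "nbhd q k b = {x \<in> arrays q. 1 \<le> hd_dist b x \<and> hd_dist b x \<le> k}"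

definition dmax_at :: "nat \<Rightarrow> nat \<Rightarrow> (bool list \<Rightarrow> nat) \<Rightarrow> bool list \<Rightarrow> real" where
  "dmax_at q k f b = Max ((\<lambda>x. distortion q f b x) ` nbhd q k b)"

definition dave_at :: "nat \<Rightarrow> nat \<Rightarrow> (bool list \<Rightarrow> nat) \<Rightarrow> bool list \<Rightarrow> real" where
  "dave_at q k f b = (\<Sum>x\<in>nbhd q k b. distortion q f b x) / real (card (nbhd q k b))"

definition dmax :: "nat \<Rightarrow> nat \<Rightarrow> (bool list \<Rightarrow> nat) \<Rightarrow> real" where
  "dmax q k f = Max ((\<lambda>b. dmax_at q k f b) ` arrays q)"

definition dave :: "nat \<Rightarrow> nat \<Rightarrow> (bool list \<Rightarrow> nat) \<Rightarrow> real" where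
  "dave q k f = (\<Sum>b\<in>arrays q. dave_at q k f b) / 2 ^ q"

end

theory Submission
  imports Defs
begin

text \<open>The Hamming-distance-based bijection lists the arrays weight layer by weight layer.
  An array preceding b either precedes x or has weight between w_H(x) and w_H(b); if
  d_H(b, x) \<le> k these weights differ by at most k, so the ranks of b and x differ by at most
  k + 1 layers, each of size at most C(q, q div 2). As C(q, q div 2)^2 (q + 1) \<le> 4^q, the
  resulting bound (k + 1) C(q, q div 2) / 2^q on every distortion tends to 0, and it bounds both
  the maximum and the average distortion.\<close>

lemma finite_arrays: "finite (arrays q)"
  using finite_lists_length_eq[of "UNIV :: bool set" q] by (simp add: arrays_def)

lemma card_arrays: "card (arrays q) = 2 ^ q"
  using card_lists_length_eq[of "UNIV :: bool set" q] by (simp add: arrays_def)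

lemma succeq_refl: "succeq b b"
  by (simp add: succeq_def)

lemma succeq_total: "succeq a b \<or> succeq b a"
  unfolding succeq_def by auto

lemma succeq_antisym: "succeq a b \<Longrightarrow> succeq b a \<Longrightarrow> a = b"
  unfolding succeq_def by auto

lemma succeq_trans: "succeq a b \<Longrightarrow> succeq b c \<Longrightarrow> succeq a c"
  unfolding succeq_def by (auto intro: order_trans)

lemma bij_betw_atLeast0LessThan_eq_card_less:
  fixes f :: "'a \<Rightarrow> nat"
  assumes "bij_betw f A {0..<n}" and "b \<in> A"
  shows "f b = card {x \<in> A. f x < f b}"
proof -
  have "f ` {x \<in> A. f x < f b} = {0..<f b}"
  proof
    show "{0..<f b} \<subseteq> f ` {x \<in> A. f x < f b}"
    proof
      fix y assume y: "y \<in> {0..<f b}"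
      moreover have "f b < n"
        using assms by (auto simp: bij_betw_def)
      ultimately have "y \<in> f ` A"
        using assms(1) by (simp add: bij_betw_def)
      with y show "y \<in> f ` {x \<in> A. f x < f b}" by auto
    qed
  qed auto
  moreover have "inj_on f {x \<in> A. f x < f b}"
    using bij_betw_imp_inj_on[OF assms(1)] by (rule inj_on_subset) auto
  ultimately show ?thesis
    using card_image by fastforce
qed

definition weight_rank :: "nat \<Rightarrow> bool list \<Rightarrow> nat" where
  "weight_rank q b = card {x \<in> arrays q. \<not> succeq x b}"

lemma weight_rank_le_iff:
  assumes "b1 \<in> arrays q" "b2 \<in> arrays q"
  shows "weight_rank q b2 \<le> weight_rank q b1 \<longleftrightarrow> succeq b1 b2"
proof
  assume "succeq b1 b2"
  then show "weight_rank q b2 \<le> weight_rank q b1"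
    unfolding weight_rank_def using succeq_trans finite_arrays
    by (intro card_mono) auto
next
  assume le: "weight_rank q b2 \<le> weight_rank q b1"
  show "succeq b1 b2"
  proof (rule ccontr)
    assume "\<not> succeq b1 b2"
    then have "{x \<in> arrays q. \<not> succeq x b1} \<subset> {x \<in> arrays q. \<not> succeq x b2}"
      using assms succeq_total succeq_trans succeq_refl by blast
    then have "weight_rank q b1 < weight_rank q b2"
      unfolding weight_rank_def by (simp add: psubset_card_mono finite_arrays)
    with le show False by simp
  qed
qed

lemma bij_betw_weight_rank: "bij_betw (weight_rank q) (arrays q) {0..<2 ^ q}"
proof -
  have inj: "inj_on (weight_rank q) (arrays q)"
    by (rule inj_onI) (metis weight_rank_le_iff order_refl succeq_antisym)
  have "weight_rank q b < 2 ^ q" if "b \<in> arrays q" for b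
  proof -
    have "{x \<in> arrays q. \<not> succeq x b} \<subset> arrays q"
      using that succeq_refl by auto
    then show ?thesis
      unfolding weight_rank_def card_arrays[symmetric] by (rule psubset_card_mono[OF finite_arrays])
  qed
  then have "weight_rank q ` arrays q = {0..<2 ^ q}"
    using card_image[OF inj] by (intro card_subset_eq) (auto simp: card_arrays)
  with inj show ?thesis by (simp add: bij_betw_def)
qed

lemma fH_eq_weight_rank:
  assumes "b \<in> arrays q"
  shows "fH q b = weight_rank q b"
proof -
  define P where "P f \<longleftrightarrow> bij_betw (f :: bool list \<Rightarrow> nat) (arrays q) {0..<2^q}
      \<and> (\<forall>b1\<in>arrays q. \<forall>b2\<in>arrays q. f b1 \<ge> f b2 \<longleftrightarrow> succeq b1 b2)
      \<and> (\<forall>x. x \<notin> arrays q \<longrightarrow> f x = 0)" for f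
  define r where "r b = (if b \<in> arrays q then weight_rank q b else 0)" for b
  have "bij_betw r (arrays q) {0..<2^q}"
    using bij_betw_weight_rank by (rule bij_betw_cong[THEN iffD1, rotated]) (simp add: r_def)
  then have "P r"
    unfolding P_def using weight_rank_le_iff by (simp add: r_def)
  moreover have "f = r" if "P f" for f
  proof
    fix b
    show "f b = r b"
    proof (cases "b \<in> arrays q")
      case True
      have "{x \<in> arrays q. f x < f b} = {x \<in> arrays q. \<not> succeq x b}"
        using \<open>P f\<close> True unfolding P_def by (meson not_le)
      moreover have "f b = card {x \<in> arrays q. f x < f b}"
        using \<open>P f\<close> True unfolding P_def by (blast intro: bij_betw_atLeast0LessThan_eq_card_less)
      ultimately show ?thesis
        using True by (simp add: r_def weight_rank_def)
    qed (use \<open>P f\<close> in \<open>simp add: P_def r_def\<close>)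
  qed
  ultimately have "fH q = r"
    unfolding fH_def P_def[symmetric] by (rule the_equality)
  with assms show ?thesis by (simp add: r_def)
qed

lemma hw_eq_card: "hw xs = card {i. i < length xs \<and> xs ! i}"
  by (simp add: hw_def count_list_eq_length_filter length_filter_conv_card eq_commute)

lemma hw_le_hw_add_hd_dist:
  assumes "length xs = length ys"
  shows "hw xs \<le> hw ys + hd_dist xs ys"
proof -
  have "{i. i < length xs \<and> xs ! i}
      \<subseteq> {i. i < length ys \<and> ys ! i} \<union> {i. i < length xs \<and> xs ! i \<noteq> ys ! i}"
    using assms by auto
  then have "hw xs \<le> card ({i. i < length ys \<and> ys ! i} \<union> {i. i < length xs \<and> xs ! i \<noteq> ys ! i})"
    unfolding hw_eq_card by (intro card_mono) auto
  also have "\<dots> \<le> hw ys + hd_dist xs ys"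
    unfolding hw_eq_card hd_dist_def by (rule card_Un_le)
  finally show ?thesis .
qed

lemma hd_dist_commute: "length xs = length ys \<Longrightarrow> hd_dist xs ys = hd_dist ys xs"
  unfolding hd_dist_def by (simp add: eq_commute)

lemma card_arrays_hw_eq_le: "card {x \<in> arrays q. hw x = j} \<le> q choose j"
proof -
  let ?ones = "\<lambda>xs. {i. i < q \<and> xs ! i}"
  have "inj_on ?ones (arrays q)"
  proof (rule inj_onI)
    fix xs ys assume "xs \<in> arrays q" "ys \<in> arrays q" "?ones xs = ?ones ys"
    then show "xs = ys"
      unfolding arrays_def by (intro nth_equalityI) (simp_all, blast)
  qed
  then have "card {x \<in> arrays q. hw x = j} = card (?ones ` {x \<in> arrays q. hw x = j})"
    by (intro card_image[symmetric] inj_on_subset[OF _ Collect_restrict])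
  also have "\<dots> \<le> card {B. B \<subseteq> {0..<q} \<and> card B = j}"
    by (intro card_mono) (auto simp: arrays_def hw_eq_card)
  also have "\<dots> = q choose j"
    by (simp add: n_subsets)
  finally show ?thesis .
qed

lemma card_arrays_hw_in_le:
  assumes "finite W"
  shows "card {x \<in> arrays q. hw x \<in> W} \<le> card W * (q choose (q div 2))"
proof -
  have "card {x \<in> arrays q. hw x \<in> W} = card (\<Union>j\<in>W. {x \<in> arrays q. hw x = j})"
    by (rule arg_cong[where f = card]) auto
  also have "\<dots> \<le> (\<Sum>j\<in>W. card {x \<in> arrays q. hw x = j})"
    by (rule card_UN_le[OF assms])
  also have "\<dots> \<le> (\<Sum>j\<in>W. q choose (q div 2))"
    by (intro sum_mono order_trans[OF card_arrays_hw_eq_le binomial_maximum])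
  finally show ?thesis by simp
qed

lemma weight_rank_le_add_card_between:
  assumes "x \<in> arrays q"
  shows "weight_rank q b \<le> weight_rank q x + card {y \<in> arrays q. hw y \<in> {hw x..hw b}}"
proof -
  have "{y \<in> arrays q. \<not> succeq y b}
      \<subseteq> {y \<in> arrays q. \<not> succeq y x} \<union> {y \<in> arrays q. hw y \<in> {hw x..hw b}}"
    by (auto simp: succeq_def)
  then have "weight_rank q b \<le> card ({y \<in> arrays q. \<not> succeq y x} \<union> {y \<in> arrays q. hw y \<in> {hw x..hw b}})"
    unfolding weight_rank_def by (intro card_mono) (simp_all add: finite_arrays)
  also have "\<dots> \<le> weight_rank q x + card {y \<in> arrays q. hw y \<in> {hw x..hw b}}"
    unfolding weight_rank_def by (rule card_Un_le)
  finally show ?thesis .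
qed

lemma weight_rank_le_add:
  assumes "b \<in> arrays q" "x \<in> arrays q" "hd_dist b x \<le> k"
  shows "weight_rank q b \<le> weight_rank q x + (k + 1) * (q choose (q div 2))"
proof -
  have "hw b \<le> hw x + k"
    using hw_le_hw_add_hd_dist[of b x] assms by (simp add: arrays_def)
  then have "card {hw x..hw b} \<le> k + 1" by simp
  have "weight_rank q b \<le> weight_rank q x + card {y \<in> arrays q. hw y \<in> {hw x..hw b}}"
    by (rule weight_rank_le_add_card_between[OF assms(2)])
  also have "\<dots> \<le> weight_rank q x + card {hw x..hw b} * (q choose (q div 2))"
    using card_arrays_hw_in_le[of "{hw x..hw b}" q] by simp
  also have "\<dots> \<le> weight_rank q x + (k + 1) * (q choose (q div 2))"
    using \<open>card {hw x..hw b} \<le> k + 1\<close> by (intro add_left_mono mult_right_mono) simp_all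
  finally show ?thesis .
qed

lemma distortion_fH_le:
  assumes "b \<in> arrays q" "x \<in> nbhd q k b"
  shows "distortion q (fH q) b x \<le> real (k + 1) * (real (q choose (q div 2)) / 2 ^ q)"
proof -
  have x: "x \<in> arrays q" and "hd_dist b x \<le> k" "hd_dist x b \<le> k"
    using assms hd_dist_commute[of b x] by (auto simp: nbhd_def arrays_def)
  then have "weight_rank q b \<le> weight_rank q x + (k + 1) * (q choose (q div 2))"
    and "weight_rank q x \<le> weight_rank q b + (k + 1) * (q choose (q div 2))"
    using assms(1) weight_rank_le_add by blast+
  then have "\<bar>real (weight_rank q b) - real (weight_rank q x)\<bar> \<le> real ((k + 1) * (q choose (q div 2)))"
    by (simp only: abs_le_iff) linarith
  then have "distortion q (fH q) b x \<le> real ((k + 1) * (q choose (q div 2))) / 2 ^ q"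
    unfolding distortion_def fH_eq_weight_rank[OF assms(1)] fH_eq_weight_rank[OF x]
    by (rule divide_right_mono) simp
  then show ?thesis by (simp add: distrib_right)
qed

lemma central_binomial_double: "2 * Suc n choose Suc n = 2 * (2 * n + 1 choose n)"
proof -
  have "2 * n + 1 choose Suc n = 2 * n + 1 choose n"
    using central_binomial_odd[of "2 * n + 1"] by simp
  then show ?thesis by (simp only: mult_Suc_right add_Suc_right binomial_Suc_Suc) simp
qed

lemma central_binomial_Suc:
  "Suc n * (2 * Suc n choose Suc n) = 2 * (2 * n + 1) * (2 * n choose n)"
proof -
  have "2 * n + 1 choose Suc n = 2 * n + 1 choose n"
    using central_binomial_odd[of "2 * n + 1"] by simp
  moreover have "Suc n * (Suc (2 * n) choose Suc n) = Suc (2 * n) * (2 * n choose n)"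
    by (rule Suc_times_binomial)
  ultimately show ?thesis unfolding central_binomial_double by simp
qed

lemma central_binomial_even_bound: "(2 * n choose n)^2 * (2 * n + 1) \<le> 16 ^ n"
proof (induction n)
  case (Suc n)
  let ?c = "2 * n choose n" and ?d = "2 * Suc n choose Suc n"
  have "(Suc n * ?d)^2 * (2 * n + 3) = 4 * (2 * n + 1) * (2 * n + 3) * (?c^2 * (2 * n + 1))"
    unfolding central_binomial_Suc by (simp only: power2_eq_square ac_simps)
  also have "\<dots> \<le> 4 * (2 * n + 1) * (2 * n + 3) * 16 ^ n"
    using Suc.IH by (rule mult_left_mono) simp
  also have "\<dots> \<le> 16 * (Suc n)^2 * 16 ^ n"
    by (rule mult_right_mono) (simp_all add: power2_eq_square algebra_simps)
  finally have "(Suc n)^2 * (?d^2 * (2 * n + 3)) \<le> (Suc n)^2 * (16 * 16 ^ n)"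
    by (simp only: power_mult_distrib ac_simps)
  then have "?d^2 * (2 * n + 3) \<le> 16 * 16 ^ n"
    by (rule nat_mult_le_cancel1[THEN iffD1, rotated]) simp
  moreover have "2 * Suc n + 1 = 2 * n + 3" by simp
  ultimately show ?case by (simp only: power_Suc)
qed simp

lemma central_binomial_bound: "(q choose (q div 2))^2 * (q + 1) \<le> 4 ^ q"
proof (cases "even q")
  case True
  then obtain n where "q = 2 * n" by blast
  then show ?thesis using central_binomial_even_bound[of n] by (simp add: power_mult)
next
  case False
  then obtain n where q: "q = 2 * n + 1" using oddE by blast
  have "4 * ((2 * n + 1 choose n)^2 * (2 * n + 2)) \<le> (2 * (2 * n + 1 choose n))^2 * (2 * Suc n + 1)"
    by (simp add: power2_eq_square algebra_simps)
  also have "\<dots> \<le> 4 * 4 ^ q"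
    using central_binomial_even_bound[of "Suc n"] q
    by (simp only: central_binomial_double) (simp add: power_mult)
  finally show ?thesis using q by simp
qed

lemma central_binomial_div_power_tendsto_0:
  "(\<lambda>q. real (q choose (q div 2)) / 2 ^ q) \<longlonglongrightarrow> 0"
proof (rule real_tendsto_sandwich[where f = "\<lambda>_. 0"])
  show "\<forall>\<^sub>F q in sequentially. real (q choose (q div 2)) / 2 ^ q \<le> sqrt (inverse (real (Suc q)))"
  proof (intro always_eventually allI real_le_rsqrt)
    fix q
    have "real ((q choose (q div 2))^2 * (q + 1)) \<le> 4 ^ q"
      using of_nat_mono[OF central_binomial_bound[of q]] by simp
    moreover have "(4 :: real) ^ q = 2 ^ q * 2 ^ q"
      by (simp add: power_mult_distrib[symmetric])
    ultimately show "(real (q choose (q div 2)) / 2 ^ q)^2 \<le> inverse (real (Suc q))"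
      by (simp add: power_divide power2_eq_square field_simps)
  qed
  show "(\<lambda>q. sqrt (inverse (real (Suc q)))) \<longlonglongrightarrow> 0"
    using tendsto_real_sqrt[OF LIMSEQ_inverse_real_of_nat] by simp
qed simp_all

lemma distortion_nonneg: "0 \<le> distortion q f b x"
  by (simp add: distortion_def)

lemma finite_nbhd: "finite (nbhd q k b)"
  by (simp add: nbhd_def finite_arrays)

lemma nbhd_nonempty:
  assumes "q \<ge> 1" "k \<ge> 1" "b \<in> arrays q"
  shows "nbhd q k b \<noteq> {}"
proof -
  let ?x = "b[0 := \<not> b ! 0]"
  have "{i. i < length b \<and> b ! i \<noteq> ?x ! i} = {0}"
    using assms by (auto simp: arrays_def nth_list_update)
  then have "?x \<in> nbhd q k b"
    using assms by (simp add: nbhd_def hd_dist_def arrays_def)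
  then show ?thesis by blast
qed

lemma Max_image_in:
  assumes "finite A" "A \<noteq> {}" "\<And>x. x \<in> A \<Longrightarrow> g x \<in> S"
  shows "Max (g ` A) \<in> S"
proof -
  have "Max (g ` A) \<in> g ` A"
    using assms(1,2) by (intro Max_in) simp_all
  then obtain x where "x \<in> A" "Max (g ` A) = g x" by blast
  with assms(3) show ?thesis by simp
qed

text \<open>For q = 0 every neighbourhood is empty and dmax is a Max over an empty set, which is
  unspecified; hence the hypothesis q \<ge> 1.\<close>
lemma dmax_in_bounds:
  assumes "q \<ge> 1" "k \<ge> 1"
    and "\<And>b x. b \<in> arrays q \<Longrightarrow> x \<in> nbhd q k b \<Longrightarrow> distortion q f b x \<le> c"
  shows "dmax q k f \<in> {0..c}"
proof -
  have "dmax_at q k f b \<in> {0..c}" if "b \<in> arrays q" for b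
    unfolding dmax_at_def using nbhd_nonempty[OF assms(1,2) that] assms(3)[OF that]
    by (intro Max_image_in) (simp_all add: finite_nbhd distortion_nonneg)
  moreover have "arrays q \<noteq> {}"
    by (auto simp: arrays_def intro: exI[of _ "replicate q False"])
  ultimately show ?thesis
    unfolding dmax_def by (intro Max_image_in) (simp_all add: finite_arrays)
qed

lemma average_in_bounds:
  fixes g :: "'a \<Rightarrow> real"
  assumes "\<And>x. x \<in> A \<Longrightarrow> g x \<in> {0..c}" and "0 \<le> c"
  shows "sum g A / card A \<in> {0..c}"
proof (cases "card A = 0")
  case False
  have "sum g A \<le> card A * c"
    using sum_bounded_above[of A g c] assms(1) by auto
  moreover have "0 \<le> sum g A"
    using assms(1) by (intro sum_nonneg) auto
  ultimately show ?thesis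
    using False by (simp add: divide_le_eq mult.commute)
qed (simp add: assms(2))

lemma dave_in_bounds:
  assumes "0 \<le> c"
    and "\<And>b x. b \<in> arrays q \<Longrightarrow> x \<in> nbhd q k b \<Longrightarrow> distortion q f b x \<le> c"
  shows "dave q k f \<in> {0..c}"
proof -
  have "dave_at q k f b \<in> {0..c}" if "b \<in> arrays q" for b
    unfolding dave_at_def using assms that distortion_nonneg by (intro average_in_bounds) auto
  moreover have "(2 :: real) ^ q = card (arrays q)"
    by (simp add: card_arrays)
  ultimately show ?thesis
    unfolding dave_def using assms(1) by (simp only:) (intro average_in_bounds)
qed

theorem theorem1:
  fixes k :: nat
  assumes "k \<ge> 1"
  shows "(\<lambda>q. dmax q k (fH q)) \<longlonglongrightarrow> 0 \<and> (\<lambda>q. dave q k (fH q)) \<longlonglongrightarrow> 0"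
proof -
  define B where "B q = real (k + 1) * (real (q choose (q div 2)) / 2 ^ q)" for q
  have B_tendsto: "B \<longlonglongrightarrow> 0"
    using tendsto_mult_right_zero[OF central_binomial_div_power_tendsto_0, of "real (k + 1)"]
    unfolding B_def by simp
  have "dmax q k (fH q) \<in> {0..B q}" if "q \<ge> 1" for q
    using that assms distortion_fH_le unfolding B_def by (intro dmax_in_bounds) auto
  then have "\<forall>\<^sub>F q in sequentially. dmax q k (fH q) \<in> {0..B q}"
    by (rule eventually_sequentiallyI)
  moreover have "\<forall>\<^sub>F q in sequentially. dave q k (fH q) \<in> {0..B q}"
    using distortion_fH_le unfolding B_def by (intro always_eventually allI dave_in_bounds) auto
  ultimately show ?thesis
    by (intro conjI real_tendsto_sandwich[OF _ _ tendsto_const B_tendsto]; auto elim: eventually_mono)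
qed

end
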